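(* Consider the Gaussian broadcast model on $P=\mathbb{Z}_{\ge0}^2$ with $(\alpha_1,\alpha_2)=(1,1/2)$. For every integer $t\ge0$, the random variable $$\widehat\zeta:=\sum_{i=0}^t\binom{t}{i}X_{(i,t-i)}$$ maximizes $\zeta\mapsto \operatorname{Cov}(\zeta,X_0)/\sqrt{\operatorname{Var}(\zeta)}$ over all nonzero linear combinations $\zeta=\sum_{i=0}^t c_iX_{(i,t-i)}$ (with $c_i\in\mathbb R$ not all zero), and $$\frac{\operatorname{Cov}(\widehat\zeta,X_0)}{\sqrt{\operatorname{Var}(\widehat\zeta)}}=\frac{1}{\sqrt{\frac{t}{4^t}\binom{2t}{t}+1}}.$$
   Context: Gaussian broadcast model: Let $d\ge 0$ and let $P$ be an infinite graded poset with layers $L_0,L_1,\dots$ ($L_t$ = elements of rank $t$, $L_0$ = minimal elements), in which every element covers at most $d+1$ elements. For $v\in P$ let $\mathfrak p(v)$ be the set of elements covered by $v$. Given $\alpha_1,\dots,\alpha_{d+1}>0$, let $X_0\sim\mathcal N(0,1)$ and, independently, let $W_{u\to v}$ be i.i.d. $\mathcal N(0,1)$ indexed by covering pairs $u\lessdot v$. Set $X_v=X_0$ for $v\in L_0$, and for $v$ of rank $\ge1$ set $X_v=\alpha_{|\mathfrak p(v)|}\sum_{u\in\mathfrak p(v)}(X_u+W_{u\to v})$. Here $d=1$ and $P=\mathbb{Z}_{\ge0}^2$ with the componentwise order; $L_t=\{(i,t-i):0\le i\le t\}$; $|\mathfrak p(v)|$ is the number of positive coordinates of $v$. *)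

theory Defs
  imports "HOL-Probability.Probability"
begin

definition cover_pairs :: "((nat \<times> nat) \<times> (nat \<times> nat)) set" where
  "cover_pairs = {((i, j), (i', j')). (i' = Suc i \<and> j' = j) \<or> (i' = i \<and> j' = Suc j)}"

fun gbX :: "real \<Rightarrow> real \<Rightarrow> ('a \<Rightarrow> real) \<Rightarrow> ((nat \<times> nat) \<times> (nat \<times> nat) \<Rightarrow> 'a \<Rightarrow> real)
              \<Rightarrow> nat \<times> nat \<Rightarrow> 'a \<Rightarrow> real" where
  "gbX a1 a2 X0 W (0, 0) = X0"
| "gbX a1 a2 X0 W (Suc i, 0) =
     (\<lambda>\<omega>. a1 * (gbX a1 a2 X0 W (i, 0) \<omega> + W ((i, 0), (Suc i, 0)) \<omega>))"
| "gbX a1 a2 X0 W (0, Suc j) =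
     (\<lambda>\<omega>. a1 * (gbX a1 a2 X0 W (0, j) \<omega> + W ((0, j), (0, Suc j)) \<omega>))"
| "gbX a1 a2 X0 W (Suc i, Suc j) =
     (\<lambda>\<omega>. a2 * ((gbX a1 a2 X0 W (i, Suc j) \<omega> + W ((i, Suc j), (Suc i, Suc j)) \<omega>)
               + (gbX a1 a2 X0 W (Suc i, j) \<omega> + W ((Suc i, j), (Suc i, Suc j)) \<omega>)))"

definition Expect :: "'a measure \<Rightarrow> ('a \<Rightarrow> real) \<Rightarrow> real" where
  "Expect M X = integral\<^sup>L M X"

definition Cov :: "'a measure \<Rightarrow> ('a \<Rightarrow> real) \<Rightarrow> ('a \<Rightarrow> real) \<Rightarrow> real" where
  "Cov M X Y = integral\<^sup>L M (\<lambda>\<omega>. (X \<omega> - Expect M X) * (Y \<omega> - Expect M Y))"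

definition Var :: "'a measure \<Rightarrow> ('a \<Rightarrow> real) \<Rightarrow> real" where
  "Var M X = integral\<^sup>L M (\<lambda>\<omega>. (X \<omega> - Expect M X)\<^sup>2)"

end

theory Submission
  imports Defs
begin

text \<open>Unrolling the recursion, \<open>X_v = X_0 + \<Sum>_e a_v(e) W_e\<close>, where \<open>a_v(e)\<close> is alpha at the head of
  \<open>e\<close> times the total weight of the downward lattice paths from \<open>v\<close> to that head. A layer-\<open>t\<close>
  combination \<open>\<zeta> = \<Sum>_i c_i X_(i,t-i)\<close> therefore has \<open>Cov(\<zeta>, X_0) = \<Sum>_i c_i\<close> and
  \<open>Var \<zeta> = (\<Sum>_i c_i)\<^sup>2 + |A c|\<^sup>2\<close>, where \<open>A c = \<Sum>_i c_i a_(i,t-i)\<close>.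

  The key fact is that the binomial vector \<open>b_i = C(t,i)\<close> is an eigenvector of the noise
  covariance \<open>K = A\<^sup>T A\<close> of layer \<open>t\<close>, with eigenvalue \<open>t C(2t,t) / 2^t\<close>. Cauchy-Schwarz against
  \<open>A b\<close> then gives \<open>|A c|\<^sup>2 \<ge> \<kappa> (\<Sum>_i c_i)\<^sup>2\<close> with \<open>\<kappa> = t C(2t,t) / 4^t\<close>, with equality for
  \<open>c = b\<close>, and this is the claim.

  For the eigenvector property, \<open>G(z) = \<Sum>_k C(t,k) K(z, (k,t-k))\<close> makes sense for every \<open>z\<close> of
  rank at most \<open>t\<close>. Below layer \<open>t\<close> its second differences \<open>G(z+e1) + G(z+e2) - 2 G(z)\<close> equal
  \<open>2^t C(|z|, z1) / 2^|z|\<close>; together with the recursion of \<open>G\<close> on layer \<open>t\<close> this forces \<open>G\<close> to be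
  constant along the layer, and the constant is found by summing \<open>G\<close> against binomial weights layer
  by layer.\<close>

lemma sum_choose_real: "(\<Sum>k\<le>n. real (n choose k)) = 2 ^ n"
  using choose_row_sum[of n] by (metis of_nat_numeral of_nat_power of_nat_sum)

lemma binomial_sum_Suc:
  fixes g :: "nat \<Rightarrow> 'a :: comm_semiring_1"
  shows "(\<Sum>k\<le>Suc n. of_nat (Suc n choose k) * g k)
    = (\<Sum>k\<le>n. of_nat (n choose k) * g k) + (\<Sum>k\<le>n. of_nat (n choose k) * g (Suc k))"
proof -
  have "(\<Sum>k\<le>Suc n. of_nat (Suc n choose k) * g k)
      = g 0 + (\<Sum>k\<le>n. of_nat (n choose Suc k) * g (Suc k)) + (\<Sum>k\<le>n. of_nat (n choose k) * g (Suc k))"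
    by (subst sum.atMost_Suc_shift) (simp add: sum.distrib distrib_right add_ac)
  also have "g 0 + (\<Sum>k\<le>n. of_nat (n choose Suc k) * g (Suc k)) = (\<Sum>k\<le>Suc n. of_nat (n choose k) * g k)"
    by (subst sum.atMost_Suc_shift) simp
  also have "\<dots> = (\<Sum>k\<le>n. of_nat (n choose k) * g k)"
    by (simp add: binomial_eq_0)
  finally show ?thesis .
qed

lemma central_binomial_Suc: "Suc n * (2 * Suc n choose Suc n) = 2 * (2 * n + 1) * (2 * n choose n)"
proof -
  have "Suc n * (Suc (Suc (2 * n)) choose Suc n) = Suc (Suc (2 * n)) * (Suc (2 * n) choose n)"
    by (rule Suc_times_binomial)
  moreover have "Suc n * (Suc (2 * n) choose n) = Suc (2 * n) * (2 * n choose n)"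
    using Suc_times_binomial[of n "2 * n"] Suc_times_binomial_add[of n n] by (simp add: mult_2)
  ultimately have "Suc n * (Suc n * (2 * Suc n choose Suc n)) = Suc n * (2 * (2 * n + 1) * (2 * n choose n))"
    by (simp add: algebra_simps)
  then show ?thesis
    by (metis mult_left_cancel nat.distinct(1))
qed

lemma div_sqrt_add_sq_le:
  fixes s q \<kappa> :: real
  assumes "0 \<le> \<kappa>" "\<kappa> * s\<^sup>2 \<le> q"
  shows "s / sqrt (s\<^sup>2 + q) \<le> 1 / sqrt (\<kappa> + 1)"
proof (cases "0 < s")
  case True
  have "s * sqrt (\<kappa> + 1) = sqrt (s\<^sup>2 * (\<kappa> + 1))"
    using True by (simp add: real_sqrt_mult)
  also have "\<dots> \<le> sqrt (s\<^sup>2 + q)"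
    using assms by (simp add: algebra_simps)
  finally have "s * sqrt (\<kappa> + 1) \<le> sqrt (s\<^sup>2 + q)" .
  moreover have "0 < s * sqrt (\<kappa> + 1)"
    using True assms by simp
  moreover from calculation have "0 < sqrt (s\<^sup>2 + q)"
    by linarith
  ultimately have "s / sqrt (s\<^sup>2 + q) \<le> s / (s * sqrt (\<kappa> + 1))"
    using True by (intro divide_left_mono) (auto intro: mult_pos_pos)
  then show ?thesis
    using True by simp
next
  case False
  have "0 \<le> q"
    using assms by (meson mult_nonneg_nonneg order_trans zero_le_power2)
  with False have "s / sqrt (s\<^sup>2 + q) \<le> 0"
    by (intro divide_nonpos_nonneg) auto
  also have "0 \<le> 1 / sqrt (\<kappa> + 1)"
    using assms by simp
  finally show ?thesis .
qed

lemma div_sqrt_add_sq_eq: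
  fixes s \<kappa> :: real
  assumes "0 < s"
  shows "s / sqrt (s\<^sup>2 + \<kappa> * s\<^sup>2) = 1 / sqrt (\<kappa> + 1)"
proof -
  have "s\<^sup>2 + \<kappa> * s\<^sup>2 = s\<^sup>2 * (\<kappa> + 1)"
    by (simp add: algebra_simps)
  then have "sqrt (s\<^sup>2 + \<kappa> * s\<^sup>2) = sqrt (s\<^sup>2) * sqrt (\<kappa> + 1)"
    by (simp only: real_sqrt_mult)
  also have "\<dots> = s * sqrt (\<kappa> + 1)"
    using assms by simp
  finally show ?thesis
    using assms by simp
qed

section \<open>Linear combinations of independent standard normals\<close>

lemma (in prob_space) std_normal_moments:
  assumes "distributed M lborel Y std_normal_density"
  shows "integrable M Y" "integrable M (\<lambda>\<omega>. Y \<omega> * Y \<omega>)"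
    "expectation Y = 0" "expectation (\<lambda>\<omega>. Y \<omega> * Y \<omega>) = 1"
proof -
  show "integrable M Y"
    using distributed_integrable[OF assms, of "\<lambda>x. x ^ 1"] integrable_std_normal_moment[of 1]
    by (simp add: normal_density_nonneg)
  have "integrable M (\<lambda>\<omega>. Y \<omega> ^ 2)"
    using distributed_integrable[OF assms, of "\<lambda>x. x ^ 2"] integrable_std_normal_moment[of 2]
    by (simp add: normal_density_nonneg)
  then show "integrable M (\<lambda>\<omega>. Y \<omega> * Y \<omega>)"
    by (simp add: power2_eq_square)
  show "expectation Y = 0"
    using assms by (rule standard_normal_distributed_expectation)
  moreover have "variance Y = 1"
    using assms by (rule standard_normal_distributed_variance)
  ultimately show "expectation (\<lambda>\<omega>. Y \<omega> * Y \<omega>) = 1"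
    by (simp add: power2_eq_square)
qed

lemma (in prob_space) indep_std_normal_product:
  assumes normal: "\<And>k. k \<in> J \<Longrightarrow> distributed M lborel (Z k) std_normal_density"
    and indep: "indep_vars (\<lambda>_. borel) Z J" and "k \<in> J" "k' \<in> J"
  shows "integrable M (\<lambda>\<omega>. Z k \<omega> * Z k' \<omega>) \<and> expectation (\<lambda>\<omega>. Z k \<omega> * Z k' \<omega>) = (if k = k' then 1 else 0)"
proof (cases "k = k'")
  case True
  then show ?thesis
    using std_normal_moments[OF normal] \<open>k \<in> J\<close> by simp
next
  case False
  have indep_pair: "indep_vars (\<lambda>_. borel) Z {k, k'}"
    using indep_vars_subset[OF indep] assms(3,4) by simp
  have integrable: "\<And>i. i \<in> {k, k'} \<Longrightarrow> integrable M (Z i)"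
    using std_normal_moments(1)[OF normal] assms(3,4) by auto
  have "(\<lambda>\<omega>. Z k \<omega> * Z k' \<omega>) = (\<lambda>\<omega>. \<Prod>i\<in>{k, k'}. Z i \<omega>)"
    using False by simp
  moreover have "integrable M (\<lambda>\<omega>. \<Prod>i\<in>{k, k'}. Z i \<omega>)"
    using indep_pair integrable by (intro indep_vars_integrable) auto
  moreover have "expectation (\<lambda>\<omega>. \<Prod>i\<in>{k, k'}. Z i \<omega>) = (\<Prod>i\<in>{k, k'}. expectation (Z i))"
    using indep_pair integrable by (intro indep_vars_lebesgue_integral) auto
  moreover have "(\<Prod>i\<in>{k, k'}. expectation (Z i)) = 0"
    using std_normal_moments(3)[OF normal] assms(3) False by simp
  ultimately show ?thesis
    using False by simp
qed

lemma (in prob_space) indep_std_normal_combination: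
  assumes normal: "\<And>k. k \<in> J \<Longrightarrow> distributed M lborel (Z k) std_normal_density"
    and indep: "indep_vars (\<lambda>_. borel) Z J" and I: "finite I" "I \<subseteq> J"
  shows "expectation (\<lambda>\<omega>. \<Sum>k\<in>I. f k * Z k \<omega>) = 0"
    and "expectation (\<lambda>\<omega>. (\<Sum>k\<in>I. f k * Z k \<omega>) * (\<Sum>k\<in>I. g k * Z k \<omega>)) = (\<Sum>k\<in>I. f k * g k)"
proof -
  have integrable: "integrable M (Z k)" if "k \<in> I" for k
    using std_normal_moments(1)[OF normal] that I by auto
  have "expectation (\<lambda>\<omega>. \<Sum>k\<in>I. f k * Z k \<omega>) = (\<Sum>k\<in>I. expectation (\<lambda>\<omega>. f k * Z k \<omega>))"
    using integrable by (intro Bochner_Integration.integral_sum) auto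
  also have "\<dots> = (\<Sum>k\<in>I. f k * expectation (Z k))"
    by simp
  also have "\<dots> = 0"
    using std_normal_moments(3)[OF normal] I by (intro sum.neutral) auto
  finally show "expectation (\<lambda>\<omega>. \<Sum>k\<in>I. f k * Z k \<omega>) = 0" .
  have products: "integrable M (\<lambda>\<omega>. Z k \<omega> * Z k' \<omega>) \<and> expectation (\<lambda>\<omega>. Z k \<omega> * Z k' \<omega>) = (if k = k' then 1 else 0)"
    if "k \<in> I" "k' \<in> I" for k k'
    using indep_std_normal_product[OF normal indep] that I by blast
  have "expectation (\<lambda>\<omega>. (\<Sum>k\<in>I. f k * Z k \<omega>) * (\<Sum>k\<in>I. g k * Z k \<omega>))
      = expectation (\<lambda>\<omega>. \<Sum>k\<in>I. \<Sum>k'\<in>I. f k * g k' * (Z k \<omega> * Z k' \<omega>))"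
    by (simp add: sum_product algebra_simps)
  also have "\<dots> = (\<Sum>k\<in>I. expectation (\<lambda>\<omega>. \<Sum>k'\<in>I. f k * g k' * (Z k \<omega> * Z k' \<omega>)))"
    by (rule Bochner_Integration.integral_sum) (use products in auto)
  also have "\<dots> = (\<Sum>k\<in>I. \<Sum>k'\<in>I. expectation (\<lambda>\<omega>. f k * g k' * (Z k \<omega> * Z k' \<omega>)))"
    by (intro sum.cong refl Bochner_Integration.integral_sum) (use products in auto)
  also have "\<dots> = (\<Sum>k\<in>I. \<Sum>k'\<in>I. if k = k' then f k * g k' else 0)"
    using products by (intro sum.cong refl) auto
  also have "\<dots> = (\<Sum>k\<in>I. f k * g k)"
    using I(1) by simp
  finally show "expectation (\<lambda>\<omega>. (\<Sum>k\<in>I. f k * Z k \<omega>) * (\<Sum>k\<in>I. g k * Z k \<omega>)) = (\<Sum>k\<in>I. f k * g k)" .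
qed

lemma (in prob_space) X0_W_combination_moments:
  fixes X0 :: "'a \<Rightarrow> real" and W :: "'e \<Rightarrow> 'a \<Rightarrow> real"
  assumes "distributed M lborel X0 std_normal_density"
    and "\<And>e. e \<in> C \<Longrightarrow> distributed M lborel (W e) std_normal_density"
    and "indep_vars (\<lambda>_. borel) (case_sum (\<lambda>_. X0) W) (Inl ` (UNIV :: 'b set) \<union> Inr ` C)"
    and "finite E" "E \<subseteq> C"
  shows "expectation (\<lambda>\<omega>. s * X0 \<omega> + (\<Sum>e\<in>E. a e * W e \<omega>)) = 0"
    and "expectation (\<lambda>\<omega>. (s * X0 \<omega> + (\<Sum>e\<in>E. a e * W e \<omega>)) * (s' * X0 \<omega> + (\<Sum>e\<in>E. a' e * W e \<omega>)))
       = s * s' + (\<Sum>e\<in>E. a e * a' e)"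
proof -
  let ?Z = "case_sum (\<lambda>_. X0) W :: 'b + 'e \<Rightarrow> 'a \<Rightarrow> real"
  \<comment> \<open>every \<open>Inl\<close> index carries \<open>X0\<close>, so a single one suffices\<close>
  define I :: "('b + 'e) set" where "I = insert (Inl undefined) (Inr ` E)"
  have normal: "distributed M lborel (?Z k) std_normal_density" if "k \<in> Inl ` UNIV \<union> Inr ` C" for k
    using assms(1,2) that by auto
  have I: "finite I" "I \<subseteq> Inl ` UNIV \<union> Inr ` C"
    using assms(4,5) by (auto simp: I_def)
  have sum_I: "(\<Sum>k\<in>I. h k) = h (Inl undefined) + (\<Sum>e\<in>E. h (Inr e))" for h :: "'b + 'e \<Rightarrow> real"
    using assms(4) unfolding I_def by (subst sum.insert) (auto simp: sum.reindex)
  have combination: "s * X0 \<omega> + (\<Sum>e\<in>E. a e * W e \<omega>) = (\<Sum>k\<in>I. case_sum (\<lambda>_. s) a k * ?Z k \<omega>)"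
    for s a \<omega>
    by (simp add: sum_I)
  show "expectation (\<lambda>\<omega>. s * X0 \<omega> + (\<Sum>e\<in>E. a e * W e \<omega>)) = 0"
    unfolding combination by (rule indep_std_normal_combination(1)[OF normal assms(3) I])
  show "expectation (\<lambda>\<omega>. (s * X0 \<omega> + (\<Sum>e\<in>E. a e * W e \<omega>)) * (s' * X0 \<omega> + (\<Sum>e\<in>E. a' e * W e \<omega>)))
       = s * s' + (\<Sum>e\<in>E. a e * a' e)"
  proof -
    have "expectation (\<lambda>\<omega>. (\<Sum>k\<in>I. case_sum (\<lambda>_. s) a k * ?Z k \<omega>) * (\<Sum>k\<in>I. case_sum (\<lambda>_. s') a' k * ?Z k \<omega>))
        = (\<Sum>k\<in>I. case_sum (\<lambda>_. s) a k * case_sum (\<lambda>_. s') a' k)"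
      by (rule indep_std_normal_combination(2)[OF normal assms(3) I])
    then show ?thesis
      by (simp only: combination[symmetric]) (simp add: sum_I)
  qed
qed

section \<open>The noise coefficients of the broadcast model\<close>

lemma nat_pair_induct [case_names origin x_axis y_axis interior]:
  assumes "P (0, 0)" "\<And>i. P (i, 0) \<Longrightarrow> P (Suc i, 0)" "\<And>j. P (0, j) \<Longrightarrow> P (0, Suc j)"
    "\<And>i j. P (i, Suc j) \<Longrightarrow> P (Suc i, j) \<Longrightarrow> P (Suc i, Suc j)"
  shows "P z"
  by (rule gbX.induct[of "\<lambda>_ _ _ _ z. P z"]) (use assms in auto)

definition alpha :: "nat \<times> nat \<Rightarrow> real" where
  "alpha v = (if 0 < fst v \<and> 0 < snd v then 1/2 else 1)"

text \<open>\<open>path_weight u v\<close> is the total weight of the downward lattice paths from \<open>u\<close> to \<open>v\<close>,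
  a path weighing the product of \<open>alpha\<close> over its vertices other than \<open>v\<close>.\<close>

fun path_weight :: "nat \<times> nat \<Rightarrow> nat \<times> nat \<Rightarrow> real" where
  "path_weight (0, 0) v = (if v = (0, 0) then 1 else 0)"
| "path_weight (Suc i, 0) v = (if v = (Suc i, 0) then 1 else path_weight (i, 0) v)"
| "path_weight (0, Suc j) v = (if v = (0, Suc j) then 1 else path_weight (0, j) v)"
| "path_weight (Suc i, Suc j) v =
     (if v = (Suc i, Suc j) then 1 else 1/2 * (path_weight (i, Suc j) v + path_weight (Suc i, j) v))"

fun noise_coeff :: "nat \<times> nat \<Rightarrow> (nat \<times> nat) \<times> (nat \<times> nat) \<Rightarrow> real" where
  "noise_coeff (0, 0) e = 0"
| "noise_coeff (Suc i, 0) e = noise_coeff (i, 0) e + (if e = ((i, 0), (Suc i, 0)) then 1 else 0)"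
| "noise_coeff (0, Suc j) e = noise_coeff (0, j) e + (if e = ((0, j), (0, Suc j)) then 1 else 0)"
| "noise_coeff (Suc i, Suc j) e =
     1/2 * ((noise_coeff (i, Suc j) e + (if e = ((i, Suc j), (Suc i, Suc j)) then 1 else 0))
          + (noise_coeff (Suc i, j) e + (if e = ((Suc i, j), (Suc i, Suc j)) then 1 else 0)))"

lemma path_weight_eq_0: "\<not> v \<le> u \<Longrightarrow> path_weight u v = 0"
  by (induction u v rule: path_weight.induct) (auto simp: less_eq_prod_def)

lemma path_weight_self [simp]: "path_weight u u = 1"
  by (induction u rule: nat_pair_induct) auto

lemma path_weight_origin [simp]: "path_weight u (0, 0) = 1"
  by (induction u rule: nat_pair_induct) auto

lemma noise_coeff_cover_pair:
  "(p, v) \<in> cover_pairs \<Longrightarrow> noise_coeff u (p, v) = alpha v * path_weight u v"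
  by (induction u arbitrary: p v rule: nat_pair_induct)
     (auto simp: cover_pairs_def alpha_def path_weight_eq_0 less_eq_prod_def algebra_simps)

lemma path_weight_Suc_0:
  "path_weight (Suc i, 0) w = (if w = (Suc i, 0) then 1 else 0) + path_weight (i, 0) w"
  by (auto simp: path_weight_eq_0 less_eq_prod_def)

lemma path_weight_0_Suc:
  "path_weight (0, Suc j) w = (if w = (0, Suc j) then 1 else 0) + path_weight (0, j) w"
  by (auto simp: path_weight_eq_0 less_eq_prod_def)

lemma path_weight_Suc_Suc:
  "path_weight (Suc i, Suc j) w = (if w = (Suc i, Suc j) then 1 else 0)
     + 1/2 * (path_weight (i, Suc j) w + path_weight (Suc i, j) w)"
  by (auto simp: path_weight_eq_0 less_eq_prod_def)

lemma path_weight_last_step: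
  "path_weight u v = (if v = u then 1 else 0)
     + alpha (Suc (fst v), snd v) * path_weight u (Suc (fst v), snd v)
     + alpha (fst v, Suc (snd v)) * path_weight u (fst v, Suc (snd v))"
proof (induction u arbitrary: v rule: nat_pair_induct)
  case origin
  then show ?case by (cases v) auto
next
  case (x_axis i)
  show ?case
    using x_axis[of v] by (cases v) (auto simp: path_weight_Suc_0[of i] alpha_def path_weight_eq_0 less_eq_prod_def)
next
  case (y_axis j)
  show ?case
    using y_axis[of v] by (cases v) (auto simp: path_weight_0_Suc[of j] alpha_def path_weight_eq_0 less_eq_prod_def)
next
  case (interior i j)
  define v1 v2 where "v1 = (Suc (fst v), snd v)" and "v2 = (fst v, Suc (snd v))"
  have last_edge: "alpha v1 * (if v1 = (Suc i, Suc j) then 1 else 0)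
      + alpha v2 * (if v2 = (Suc i, Suc j) then 1 else 0)
      = 1/2 * ((if v = (i, Suc j) then 1 else 0) + (if v = (Suc i, j) then 1 else 0))"
    by (cases v) (auto simp: v1_def v2_def alpha_def)
  show ?case
    using interior(1)[of v] interior(2)[of v] path_weight_Suc_Suc[of i j v]
      path_weight_Suc_Suc[of i j v1] path_weight_Suc_Suc[of i j v2] last_edge
    unfolding v1_def[symmetric] v2_def[symmetric]
    by (simp add: algebra_simps)
qed

text \<open>\<open>N\<close> only truncates the (infinite) set of edges; it is harmless as long as every vertex
  involved lies below \<open>(N, N)\<close>.\<close>

definition edges_below :: "nat \<Rightarrow> ((nat \<times> nat) \<times> (nat \<times> nat)) set" where
  "edges_below N = {e \<in> cover_pairs. snd e \<le> (N, N)}"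

lemma finite_edges_below: "finite (edges_below N)"
proof (rule finite_subset)
  show "edges_below N \<subseteq> ({..N} \<times> {..N}) \<times> ({..N} \<times> {..N})"
    by (auto simp: edges_below_def cover_pairs_def less_eq_prod_def)
qed auto

lemma noise_sum_Suc_0:
  assumes "(Suc i, 0) \<le> (N, N)"
  shows "(\<Sum>e\<in>edges_below N. noise_coeff (Suc i, 0) e * f e)
    = (\<Sum>e\<in>edges_below N. noise_coeff (i, 0) e * f e) + f ((i, 0), (Suc i, 0))"
proof -
  let ?d = "((i, 0), (Suc i, 0))"
  have "?d \<in> edges_below N"
    using assms by (auto simp: edges_below_def cover_pairs_def)
  moreover have "noise_coeff (Suc i, 0) e * f e = noise_coeff (i, 0) e * f e + (if e = ?d then f e else 0)"
    for e by (simp add: distrib_right)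
  ultimately show ?thesis
    by (simp add: sum.distrib finite_edges_below)
qed

lemma noise_sum_0_Suc:
  assumes "(0, Suc j) \<le> (N, N)"
  shows "(\<Sum>e\<in>edges_below N. noise_coeff (0, Suc j) e * f e)
    = (\<Sum>e\<in>edges_below N. noise_coeff (0, j) e * f e) + f ((0, j), (0, Suc j))"
proof -
  let ?d = "((0, j), (0, Suc j))"
  have "?d \<in> edges_below N"
    using assms by (auto simp: edges_below_def cover_pairs_def)
  moreover have "noise_coeff (0, Suc j) e * f e = noise_coeff (0, j) e * f e + (if e = ?d then f e else 0)"
    for e by (simp add: distrib_right)
  ultimately show ?thesis
    by (simp add: sum.distrib finite_edges_below)
qed

lemma noise_sum_Suc_Suc:
  assumes "(Suc i, Suc j) \<le> (N, N)"
  shows "(\<Sum>e\<in>edges_below N. noise_coeff (Suc i, Suc j) e * f e)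
    = 1/2 * ((\<Sum>e\<in>edges_below N. noise_coeff (i, Suc j) e * f e) + f ((i, Suc j), (Suc i, Suc j))
           + (\<Sum>e\<in>edges_below N. noise_coeff (Suc i, j) e * f e) + f ((Suc i, j), (Suc i, Suc j)))"
proof -
  let ?d1 = "((i, Suc j), (Suc i, Suc j))" and ?d2 = "((Suc i, j), (Suc i, Suc j))"
  have "?d1 \<in> edges_below N" "?d2 \<in> edges_below N"
    using assms by (auto simp: edges_below_def cover_pairs_def)
  then have "(\<Sum>e\<in>edges_below N. noise_coeff (i, Suc j) e * f e + (if e = ?d1 then f e else 0)
             + noise_coeff (Suc i, j) e * f e + (if e = ?d2 then f e else 0))
    = (\<Sum>e\<in>edges_below N. noise_coeff (i, Suc j) e * f e) + f ?d1
      + (\<Sum>e\<in>edges_below N. noise_coeff (Suc i, j) e * f e) + f ?d2"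
    by (simp add: sum.distrib finite_edges_below)
  moreover have "(\<Sum>e\<in>edges_below N. noise_coeff (Suc i, Suc j) e * f e)
    = 1/2 * (\<Sum>e\<in>edges_below N. noise_coeff (i, Suc j) e * f e + (if e = ?d1 then f e else 0)
             + noise_coeff (Suc i, j) e * f e + (if e = ?d2 then f e else 0))"
    unfolding sum_distrib_left by (rule sum.cong) (simp_all add: algebra_simps)
  ultimately show ?thesis by simp
qed

lemma gbX_noise_expansion:
  "v \<le> (N, N) \<Longrightarrow> gbX 1 (1/2) X0 W v \<omega> = X0 \<omega> + (\<Sum>e\<in>edges_below N. noise_coeff v e * W e \<omega>)"
proof (induction v rule: nat_pair_induct)
  case origin
  then show ?case by simp
next
  case (x_axis i)
  then show ?case
    by (simp add: noise_sum_Suc_0 less_eq_prod_def del: noise_coeff.simps)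
next
  case (y_axis j)
  then show ?case
    by (simp add: noise_sum_0_Suc less_eq_prod_def del: noise_coeff.simps)
next
  case (interior i j)
  then show ?case
    by (simp add: noise_sum_Suc_Suc less_eq_prod_def del: noise_coeff.simps)
qed

section \<open>The noise covariance and its second differences\<close>

definition noise_cov :: "nat \<Rightarrow> nat \<times> nat \<Rightarrow> nat \<times> nat \<Rightarrow> real" where
  "noise_cov N v u = (\<Sum>e\<in>edges_below N. noise_coeff v e * noise_coeff u e)"

lemma noise_cov_origin [simp]: "noise_cov N (0, 0) u = 0"
  by (simp add: noise_cov_def)

lemma noise_cov_Suc_0:
  assumes "(Suc i, 0) \<le> (N, N)"
  shows "noise_cov N (Suc i, 0) u = noise_cov N (i, 0) u + path_weight u (Suc i, 0)"
  unfolding noise_cov_def noise_sum_Suc_0[OF assms]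
  by (simp add: noise_coeff_cover_pair cover_pairs_def alpha_def)

lemma noise_cov_0_Suc:
  assumes "(0, Suc j) \<le> (N, N)"
  shows "noise_cov N (0, Suc j) u = noise_cov N (0, j) u + path_weight u (0, Suc j)"
  unfolding noise_cov_def noise_sum_0_Suc[OF assms]
  by (simp add: noise_coeff_cover_pair cover_pairs_def alpha_def)

lemma noise_cov_Suc_Suc:
  assumes "(Suc i, Suc j) \<le> (N, N)"
  shows "noise_cov N (Suc i, Suc j) u
    = 1/2 * (noise_cov N (i, Suc j) u + noise_cov N (Suc i, j) u) + 1/2 * path_weight u (Suc i, Suc j)"
  unfolding noise_cov_def noise_sum_Suc_Suc[OF assms]
  by (simp add: noise_coeff_cover_pair cover_pairs_def alpha_def algebra_simps)

definition binomial_prob :: "nat \<times> nat \<Rightarrow> real" where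
  "binomial_prob z = real ((fst z + snd z) choose fst z) / 2 ^ (fst z + snd z)"

lemma binomial_prob_Suc_Suc: "binomial_prob (Suc i, Suc j) = 1/2 * (binomial_prob (i, Suc j) + binomial_prob (Suc i, j))"
proof -
  have "(Suc (Suc (i + j)) choose Suc i) = (Suc (i + j) choose i) + (Suc (i + j) choose Suc i)"
    by simp
  then show ?thesis
    by (simp add: binomial_prob_def field_simps)
qed

text \<open>As \<open>u\<close> is not below \<open>z\<close>, the path weights produced by the recursions of \<open>noise_cov\<close> cancel
  by \<open>path_weight_last_step\<close>, leaving the Pascal recursion of \<open>binomial_prob\<close>.\<close>

lemma noise_cov_second_difference:
  assumes "fst z + snd z < N" "\<not> u \<le> z"
  shows "noise_cov N (Suc (fst z), snd z) u + noise_cov N (fst z, Suc (snd z)) u - 2 * noise_cov N z u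
    = binomial_prob z"
  using assms
proof (induction z rule: nat_pair_induct)
  case origin
  then have "u \<noteq> (0, 0)" by auto
  then have "path_weight u (0, 0) = path_weight u (1, 0) + path_weight u (0, 1)"
    using path_weight_last_step[of u "(0, 0)"] by (simp add: alpha_def)
  then show ?case
    using origin noise_cov_Suc_0[of 0 N u] noise_cov_0_Suc[of 0 N u]
    by (simp add: binomial_prob_def less_eq_prod_def)
next
  case (x_axis i)
  have IH: "noise_cov N (Suc i, 0) u + noise_cov N (i, 1) u - 2 * noise_cov N (i, 0) u = binomial_prob (i, 0)"
    using x_axis by (auto simp: less_eq_prod_def)
  have "path_weight u (Suc i, 0) = path_weight u (Suc (Suc i), 0) + 1/2 * path_weight u (Suc i, 1)"
    using x_axis path_weight_last_step[of u "(Suc i, 0)"] by (auto simp: alpha_def)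
  moreover have "binomial_prob (Suc i, 0) = binomial_prob (i, 0) / 2"
    by (simp add: binomial_prob_def)
  ultimately show ?case
    using IH x_axis noise_cov_Suc_0[of "Suc i" N u] noise_cov_Suc_0[of i N u] noise_cov_Suc_Suc[of i 0 N u]
    by (simp add: less_eq_prod_def algebra_simps)
next
  case (y_axis j)
  have IH: "noise_cov N (1, j) u + noise_cov N (0, Suc j) u - 2 * noise_cov N (0, j) u = binomial_prob (0, j)"
    using y_axis by (auto simp: less_eq_prod_def)
  have "path_weight u (0, Suc j) = 1/2 * path_weight u (1, Suc j) + path_weight u (0, Suc (Suc j))"
    using y_axis path_weight_last_step[of u "(0, Suc j)"] by (auto simp: alpha_def)
  moreover have "binomial_prob (0, Suc j) = binomial_prob (0, j) / 2"
    by (simp add: binomial_prob_def)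
  ultimately show ?case
    using IH y_axis noise_cov_0_Suc[of "Suc j" N u] noise_cov_0_Suc[of j N u] noise_cov_Suc_Suc[of 0 j N u]
    by (simp add: less_eq_prod_def algebra_simps)
next
  case (interior i j)
  have IH1: "noise_cov N (Suc i, Suc j) u + noise_cov N (i, Suc (Suc j)) u - 2 * noise_cov N (i, Suc j) u
      = binomial_prob (i, Suc j)"
    using interior by (auto simp: less_eq_prod_def)
  have IH2: "noise_cov N (Suc (Suc i), j) u + noise_cov N (Suc i, Suc j) u - 2 * noise_cov N (Suc i, j) u
      = binomial_prob (Suc i, j)"
    using interior by (auto simp: less_eq_prod_def)
  have "path_weight u (Suc i, Suc j)
      = 1/2 * path_weight u (Suc (Suc i), Suc j) + 1/2 * path_weight u (Suc i, Suc (Suc j))"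
    using interior path_weight_last_step[of u "(Suc i, Suc j)"] by (auto simp: alpha_def)
  then show ?case
    using IH1 IH2 interior binomial_prob_Suc_Suc[of i j] noise_cov_Suc_Suc[of "Suc i" j N u]
      noise_cov_Suc_Suc[of i "Suc j" N u] noise_cov_Suc_Suc[of i j N u]
    by (simp add: less_eq_prod_def algebra_simps)
qed

section \<open>The binomial vector is an eigenvector of the layer covariance\<close>

definition layer_cov :: "nat \<Rightarrow> nat \<times> nat \<Rightarrow> real" where
  "layer_cov t z = (\<Sum>k\<le>t. real (t choose k) * noise_cov t z (k, t - k))"

lemma layer_cov_second_difference:
  assumes "fst z + snd z < t"
  shows "layer_cov t (Suc (fst z), snd z) + layer_cov t (fst z, Suc (snd z)) - 2 * layer_cov t z
    = 2 ^ t * binomial_prob z"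
proof -
  have "layer_cov t (Suc (fst z), snd z) + layer_cov t (fst z, Suc (snd z)) - 2 * layer_cov t z
      = (\<Sum>k\<le>t. real (t choose k) * (noise_cov t (Suc (fst z), snd z) (k, t - k)
          + noise_cov t (fst z, Suc (snd z)) (k, t - k) - 2 * noise_cov t z (k, t - k)))"
    by (simp add: layer_cov_def sum.distrib sum_subtractf sum_distrib_left algebra_simps)
  also have "\<dots> = (\<Sum>k\<le>t. real (t choose k) * binomial_prob z)"
  proof (intro sum.cong refl)
    fix k assume "k \<in> {..t}"
    with assms have "noise_cov t (Suc (fst z), snd z) (k, t - k) + noise_cov t (fst z, Suc (snd z)) (k, t - k)
        - 2 * noise_cov t z (k, t - k) = binomial_prob z"
      by (intro noise_cov_second_difference) (auto simp: less_eq_prod_def)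
    then show "real (t choose k) * (noise_cov t (Suc (fst z), snd z) (k, t - k)
        + noise_cov t (fst z, Suc (snd z)) (k, t - k) - 2 * noise_cov t z (k, t - k))
        = real (t choose k) * binomial_prob z" by simp
  qed
  also have "\<dots> = 2 ^ t * binomial_prob z"
    by (simp add: sum_choose_real flip: sum_distrib_right)
  finally show ?thesis .
qed

lemma binomial_sum_path_weight_on_layer:
  assumes "fst x + snd x = t"
  shows "(\<Sum>k\<le>t. real (t choose k) * path_weight (k, t - k) x) = real (t choose fst x)"
proof -
  have "path_weight (k, t - k) x = (if k = fst x then 1 else 0)" if "k \<le> t" for k
    using that assms by (cases x) (auto simp: less_eq_prod_def intro!: path_weight_eq_0)
  then have "(\<Sum>k\<le>t. real (t choose k) * path_weight (k, t - k) x)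
      = (\<Sum>k\<le>t. if k = fst x then real (t choose k) else 0)"
    by (intro sum.cong) auto
  also have "\<dots> = real (t choose fst x)"
    using assms by (simp add: sum.delta)
  finally show ?thesis .
qed

lemma layer_cov_Suc_Suc_on_layer:
  assumes "Suc i + Suc j = t"
  shows "layer_cov t (Suc i, Suc j)
    = 1/2 * (layer_cov t (i, Suc j) + layer_cov t (Suc i, j)) + 1/2 * real (t choose Suc i)"
proof -
  have "layer_cov t (Suc i, Suc j) = (\<Sum>k\<le>t. real (t choose k) * (1/2 * (noise_cov t (i, Suc j) (k, t - k)
      + noise_cov t (Suc i, j) (k, t - k)) + 1/2 * path_weight (k, t - k) (Suc i, Suc j)))"
    unfolding layer_cov_def using assms by (intro sum.cong refl) (simp add: noise_cov_Suc_Suc less_eq_prod_def)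
  also have "\<dots> = 1/2 * (layer_cov t (i, Suc j) + layer_cov t (Suc i, j))
      + 1/2 * (\<Sum>k\<le>t. real (t choose k) * path_weight (k, t - k) (Suc i, Suc j))"
    by (simp add: layer_cov_def sum.distrib sum_distrib_left algebra_simps)
  finally show ?thesis
    using binomial_sum_path_weight_on_layer[of "(Suc i, Suc j)" t] assms by simp
qed

lemma layer_cov_0_Suc_on_layer:
  assumes "Suc j = t"
  shows "layer_cov t (0, Suc j) = layer_cov t (0, j) + 1"
proof -
  have "layer_cov t (0, Suc j)
      = (\<Sum>k\<le>t. real (t choose k) * (noise_cov t (0, j) (k, t - k) + path_weight (k, t - k) (0, Suc j)))"
    unfolding layer_cov_def using assms noise_cov_0_Suc[of j t]
    by (intro sum.cong refl) (simp add: less_eq_prod_def)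
  also have "\<dots> = layer_cov t (0, j) + (\<Sum>k\<le>t. real (t choose k) * path_weight (k, t - k) (0, Suc j))"
    by (simp add: layer_cov_def sum.distrib distrib_left)
  finally show ?thesis
    using binomial_sum_path_weight_on_layer[of "(0, Suc j)" t] assms by simp
qed

text \<open>With \<open>g i = layer_cov t (i, t - i)\<close>, the second differences just below layer \<open>t\<close> and the
  recursion on the layer combine to \<open>g (i + 2) - g (i + 1) = g (i + 1) - g i\<close>, and \<open>g 1 = g 0\<close>.\<close>

lemma layer_cov_on_layer_step:
  assumes "Suc i \<le> t"
  shows "layer_cov t (Suc i, t - Suc i) = layer_cov t (i, t - i)"
  using assms
proof (induction i)
  case 0
  then obtain m where t: "t = Suc m" by (cases t) auto
  have "layer_cov t (0, Suc m) = layer_cov t (0, m) + 1"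
    using layer_cov_0_Suc_on_layer t by simp
  moreover have "layer_cov t (1, m) + layer_cov t (0, Suc m) - 2 * layer_cov t (0, m) = 2"
    using layer_cov_second_difference[of "(0, m)" t] t by (simp add: binomial_prob_def)
  ultimately show ?case using t by simp
next
  case (Suc i)
  define j where "j = t - Suc (Suc i)"
  have t: "t = Suc (Suc (i + j))"
    using Suc.prems by (simp add: j_def)
  have IH: "layer_cov t (Suc i, Suc j) = layer_cov t (i, Suc (Suc j))"
    using Suc t by (simp add: Suc_diff_le)
  have "Suc i + Suc j = t"
    using t by simp
  from layer_cov_Suc_Suc_on_layer[OF this]
  have on_layer: "2 * layer_cov t (Suc i, Suc j)
      = layer_cov t (i, Suc j) + layer_cov t (Suc i, j) + real (t choose Suc i)"
    by (simp add: field_simps)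
  have below1: "layer_cov t (Suc i, Suc j) + layer_cov t (i, Suc (Suc j)) - 2 * layer_cov t (i, Suc j)
      = 2 * real (Suc (i + j) choose i)"
    using layer_cov_second_difference[of "(i, Suc j)" t] t by (simp add: binomial_prob_def)
  have below2: "layer_cov t (Suc (Suc i), j) + layer_cov t (Suc i, Suc j) - 2 * layer_cov t (Suc i, j)
      = 2 * real (Suc (i + j) choose Suc i)"
    using layer_cov_second_difference[of "(Suc i, j)" t] t by (simp add: binomial_prob_def)
  have "real (t choose Suc i) = real (Suc (i + j) choose i) + real (Suc (i + j) choose Suc i)"
    using t by simp
  then have "layer_cov t (Suc (Suc i), j) = layer_cov t (Suc i, Suc j)"
    using IH on_layer below1 below2 by linarith
  moreover have "t - Suc (Suc i) = j" "t - Suc i = Suc j"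
    using t by simp_all
  ultimately show ?case by simp
qed

lemma layer_cov_on_layer_const: "i \<le> t \<Longrightarrow> layer_cov t (i, t - i) = layer_cov t (0, t)"
  by (induction i) (simp_all add: layer_cov_on_layer_step)

definition binomial_layer_sum :: "nat \<Rightarrow> nat \<Rightarrow> real" where
  "binomial_layer_sum t n = (\<Sum>k\<le>n. real (n choose k) * layer_cov t (k, n - k))"

lemma binomial_layer_sum_Suc:
  assumes "n < t"
  shows "binomial_layer_sum t (Suc n) = 2 * binomial_layer_sum t n + 2 ^ t * real (2 * n choose n) / 2 ^ n"
proof -
  have "binomial_layer_sum t (Suc n)
      = (\<Sum>k\<le>n. real (n choose k) * (layer_cov t (Suc k, n - k) + layer_cov t (k, Suc (n - k))))"
    unfolding binomial_layer_sum_def binomial_sum_Suc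
    by (simp add: sum.distrib distrib_left Suc_diff_le)
  also have "\<dots> = (\<Sum>k\<le>n. real (n choose k) * (2 * layer_cov t (k, n - k) + 2 ^ t * real (n choose k) / 2 ^ n))"
  proof (intro sum.cong refl)
    fix k assume "k \<in> {..n}"
    then have "layer_cov t (Suc k, n - k) + layer_cov t (k, Suc (n - k)) - 2 * layer_cov t (k, n - k)
        = 2 ^ t * real (n choose k) / 2 ^ n"
      using layer_cov_second_difference[of "(k, n - k)" t] assms by (simp add: binomial_prob_def)
    then show "real (n choose k) * (layer_cov t (Suc k, n - k) + layer_cov t (k, Suc (n - k)))
        = real (n choose k) * (2 * layer_cov t (k, n - k) + 2 ^ t * real (n choose k) / 2 ^ n)"
      by simp
  qed
  also have "\<dots> = 2 * binomial_layer_sum t n + 2 ^ t / 2 ^ n * (\<Sum>k\<le>n. real ((n choose k)\<^sup>2))"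
    by (simp add: binomial_layer_sum_def sum.distrib sum_distrib_left algebra_simps power2_eq_square)
  finally show ?thesis
    by (simp only: choose_square_sum of_nat_sum[symmetric]) simp
qed

lemma binomial_layer_sum_eq:
  "n \<le> t \<Longrightarrow> binomial_layer_sum t n = 2 ^ t * real n * real (2 * n choose n) / 2 ^ n"
proof (induction n)
  case 0
  then show ?case by (simp add: binomial_layer_sum_def layer_cov_def)
next
  case (Suc n)
  have "real (Suc n) * real (2 * Suc n choose Suc n) = real (Suc n * (2 * Suc n choose Suc n))"
    by (rule of_nat_mult[symmetric])
  also have "\<dots> = 2 * (2 * real n + 1) * real (2 * n choose n)"
    by (simp only: central_binomial_Suc) (simp add: algebra_simps)
  finally have central_ratio: "real (Suc n) * real (2 * Suc n choose Suc n) / 2 ^ Suc n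
      = (2 * real n + 1) * real (2 * n choose n) / 2 ^ n"
    by (simp only: power_Suc) (simp add: field_simps)
  have "binomial_layer_sum t (Suc n) = 2 * binomial_layer_sum t n + 2 ^ t * real (2 * n choose n) / 2 ^ n"
    using Suc by (simp add: binomial_layer_sum_Suc)
  also have "\<dots> = 2 ^ t * (2 * real n + 1) * real (2 * n choose n) / 2 ^ n"
    using Suc by (simp add: field_simps)
  also have "\<dots> = 2 ^ t * (real (Suc n) * real (2 * Suc n choose Suc n) / 2 ^ Suc n)"
    unfolding central_ratio by simp
  finally show ?case
    by simp
qed

definition noise_to_signal :: "nat \<Rightarrow> real" where
  "noise_to_signal t = real t / 4 ^ t * real (2 * t choose t)"

lemma noise_to_signal_nonneg: "0 \<le> noise_to_signal t"
  by (simp add: noise_to_signal_def)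

lemma layer_cov_on_layer:
  assumes "i \<le> t"
  shows "layer_cov t (i, t - i) = 2 ^ t * noise_to_signal t"
proof -
  have "binomial_layer_sum t t = 2 ^ t * layer_cov t (0, t)"
    by (simp add: binomial_layer_sum_def layer_cov_on_layer_const sum_choose_real flip: sum_distrib_right)
  moreover have "(4 :: real) ^ t = 2 ^ t * 2 ^ t"
    by (simp flip: power_mult_distrib)
  ultimately show ?thesis
    using binomial_layer_sum_eq[of t t] layer_cov_on_layer_const[OF assms]
    by (simp add: noise_to_signal_def field_simps)
qed

section \<open>Optimal linear estimation of \<open>X\<^sub>0\<close> from layer \<open>t\<close>\<close>

definition layer_noise_coeff :: "nat \<Rightarrow> (nat \<Rightarrow> real) \<Rightarrow> (nat \<times> nat) \<times> (nat \<times> nat) \<Rightarrow> real" where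
  "layer_noise_coeff t c e = (\<Sum>i\<le>t. c i * noise_coeff (i, t - i) e)"

lemma layer_combination_expansion:
  "(\<Sum>i\<le>t. c i * gbX 1 (1/2) X0 W (i, t - i) \<omega>)
    = (\<Sum>i\<le>t. c i) * X0 \<omega> + (\<Sum>e\<in>edges_below t. layer_noise_coeff t c e * W e \<omega>)"
proof -
  have "(\<Sum>i\<le>t. c i * gbX 1 (1/2) X0 W (i, t - i) \<omega>)
      = (\<Sum>i\<le>t. c i * (X0 \<omega> + (\<Sum>e\<in>edges_below t. noise_coeff (i, t - i) e * W e \<omega>)))"
    by (intro sum.cong refl) (simp add: gbX_noise_expansion less_eq_prod_def)
  then show ?thesis
    by (simp add: layer_noise_coeff_def algebra_simps sum.distrib sum_distrib_left sum_distrib_right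
        sum.swap[of _ "edges_below t"])
qed

lemma layer_noise_inner_binomial:
  "(\<Sum>e\<in>edges_below t. layer_noise_coeff t c e * layer_noise_coeff t (\<lambda>i. real (t choose i)) e)
    = 2 ^ t * noise_to_signal t * (\<Sum>i\<le>t. c i)"
proof -
  have "(\<Sum>e\<in>edges_below t. layer_noise_coeff t c e * layer_noise_coeff t (\<lambda>i. real (t choose i)) e)
      = (\<Sum>e\<in>edges_below t. \<Sum>i\<le>t. \<Sum>k\<le>t.
           c i * real (t choose k) * (noise_coeff (i, t - i) e * noise_coeff (k, t - k) e))"
    unfolding layer_noise_coeff_def sum_product by (intro sum.cong refl) (simp add: algebra_simps)
  also have "\<dots> = (\<Sum>i\<le>t. \<Sum>k\<le>t. \<Sum>e\<in>edges_below t.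
           c i * real (t choose k) * (noise_coeff (i, t - i) e * noise_coeff (k, t - k) e))"
    by (simp add: sum.swap[of _ "edges_below t"])
  also have "\<dots> = (\<Sum>i\<le>t. c i * layer_cov t (i, t - i))"
    by (simp add: layer_cov_def noise_cov_def sum_distrib_left algebra_simps)
  also have "\<dots> = (\<Sum>i\<le>t. c i) * (2 ^ t * noise_to_signal t)"
    by (simp add: layer_cov_on_layer sum_distrib_right)
  finally show ?thesis
    by (simp only: mult.commute)
qed

lemma layer_noise_binomial_norm:
  "(\<Sum>e\<in>edges_below t. (layer_noise_coeff t (\<lambda>i. real (t choose i)) e)\<^sup>2) = noise_to_signal t * (2 ^ t)\<^sup>2"
  using layer_noise_inner_binomial[of t "\<lambda>i. real (t choose i)"]
  by (simp add: sum_choose_real power2_eq_square)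

lemma layer_noise_norm_lower_bound:
  "noise_to_signal t * (\<Sum>i\<le>t. c i)\<^sup>2 \<le> (\<Sum>e\<in>edges_below t. (layer_noise_coeff t c e)\<^sup>2)"
proof (cases "noise_to_signal t = 0")
  case False
  let ?\<kappa> = "noise_to_signal t" and ?s = "\<Sum>i\<le>t. c i"
    and ?norm = "\<Sum>e\<in>edges_below t. (layer_noise_coeff t c e)\<^sup>2"
  have "(2 ^ t)\<^sup>2 * (?\<kappa> * (?\<kappa> * ?s\<^sup>2)) = (2 ^ t * ?\<kappa> * ?s)\<^sup>2"
    by (simp add: power_mult_distrib power2_eq_square)
  also have "\<dots> \<le> ?norm * (?\<kappa> * (2 ^ t)\<^sup>2)"
    using Cauchy_Schwarz_ineq_sum[where I = "edges_below t" and a = "layer_noise_coeff t c"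
        and b = "layer_noise_coeff t (\<lambda>i. real (t choose i))"]
    by (simp only: layer_noise_inner_binomial layer_noise_binomial_norm)
  also have "\<dots> = (2 ^ t)\<^sup>2 * (?\<kappa> * ?norm)"
    by (simp only: ac_simps)
  finally have "?\<kappa> * (?\<kappa> * ?s\<^sup>2) \<le> ?\<kappa> * ?norm"
    by (rule mult_left_le_imp_le) simp
  moreover have "0 < ?\<kappa>"
    using False noise_to_signal_nonneg[of t] by linarith
  ultimately show ?thesis
    by (rule mult_left_le_imp_le)
qed (simp add: sum_nonneg)

lemma (in prob_space) layer_combination_cov_var:
  fixes X0 :: "'a \<Rightarrow> real" and W :: "(nat \<times> nat) \<times> (nat \<times> nat) \<Rightarrow> 'a \<Rightarrow> real"
  assumes "distributed M lborel X0 std_normal_density"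
    and "\<And>e. e \<in> cover_pairs \<Longrightarrow> distributed M lborel (W e) std_normal_density"
    and "indep_vars (\<lambda>_. borel) (case_sum (\<lambda>_. X0) W) (Inl ` UNIV \<union> Inr ` cover_pairs)"
  shows "Cov M (\<lambda>\<omega>. \<Sum>i\<le>t. c i * gbX 1 (1/2) X0 W (i, t - i) \<omega>) X0 = (\<Sum>i\<le>t. c i)"
    and "Var M (\<lambda>\<omega>. \<Sum>i\<le>t. c i * gbX 1 (1/2) X0 W (i, t - i) \<omega>)
      = (\<Sum>i\<le>t. c i)\<^sup>2 + (\<Sum>e\<in>edges_below t. (layer_noise_coeff t c e)\<^sup>2)"
proof -
  have "finite (edges_below t)" "edges_below t \<subseteq> cover_pairs"
    by (rule finite_edges_below) (auto simp: edges_below_def)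
  note moments = X0_W_combination_moments[OF assms this]
  let ?s = "\<Sum>i\<le>t. c i" and ?a = "layer_noise_coeff t c"
  have expansion: "(\<lambda>\<omega>. \<Sum>i\<le>t. c i * gbX 1 (1/2) X0 W (i, t - i) \<omega>)
      = (\<lambda>\<omega>. ?s * X0 \<omega> + (\<Sum>e\<in>edges_below t. ?a e * W e \<omega>))"
    by (simp add: layer_combination_expansion)
  have "Expect M X0 = 0"
    using moments(1)[of 1 "\<lambda>_. 0"] by (simp add: Expect_def)
  moreover have "Expect M (\<lambda>\<omega>. \<Sum>i\<le>t. c i * gbX 1 (1/2) X0 W (i, t - i) \<omega>) = 0"
    unfolding Expect_def expansion by (rule moments(1))
  ultimately show "Cov M (\<lambda>\<omega>. \<Sum>i\<le>t. c i * gbX 1 (1/2) X0 W (i, t - i) \<omega>) X0 = ?s"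
    and "Var M (\<lambda>\<omega>. \<Sum>i\<le>t. c i * gbX 1 (1/2) X0 W (i, t - i) \<omega>)
      = ?s\<^sup>2 + (\<Sum>e\<in>edges_below t. (?a e)\<^sup>2)"
    using moments(2)[of ?s ?a 1 "\<lambda>_. 0"] moments(2)[of ?s ?a ?s ?a]
    by (simp_all add: Cov_def Var_def expansion power2_eq_square)
qed

theorem mainTheorem2:
  fixes M :: "'a measure"
    and X0 :: "'a \<Rightarrow> real"
    and W :: "(nat \<times> nat) \<times> (nat \<times> nat) \<Rightarrow> 'a \<Rightarrow> real"
    and t :: nat
  assumes "prob_space M"
    and "distributed M lborel X0 std_normal_density"
    and "\<And>e. e \<in> cover_pairs \<Longrightarrow> distributed M lborel (W e) std_normal_density"
    and "prob_space.indep_vars M (\<lambda>_. borel) (case_sum (\<lambda>_. X0) W)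
           (Inl ` UNIV \<union> Inr ` cover_pairs)"
  shows "(\<forall>c :: nat \<Rightarrow> real. (\<exists>i\<le>t. c i \<noteq> 0) \<longrightarrow>
            Cov M (\<lambda>\<omega>. \<Sum>i\<le>t. c i * gbX 1 (1/2) X0 W (i, t - i) \<omega>) X0
              / sqrt (Var M (\<lambda>\<omega>. \<Sum>i\<le>t. c i * gbX 1 (1/2) X0 W (i, t - i) \<omega>))
            \<le> Cov M (\<lambda>\<omega>. \<Sum>i\<le>t. real (t choose i) * gbX 1 (1/2) X0 W (i, t - i) \<omega>) X0
              / sqrt (Var M (\<lambda>\<omega>. \<Sum>i\<le>t. real (t choose i) * gbX 1 (1/2) X0 W (i, t - i) \<omega>)))
       \<and> Cov M (\<lambda>\<omega>. \<Sum>i\<le>t. real (t choose i) * gbX 1 (1/2) X0 W (i, t - i) \<omega>) X0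
              / sqrt (Var M (\<lambda>\<omega>. \<Sum>i\<le>t. real (t choose i) * gbX 1 (1/2) X0 W (i, t - i) \<omega>))
         = 1 / sqrt (real t / 4 ^ t * real ((2 * t) choose t) + 1)"
proof -
  interpret prob_space M by (rule assms(1))
  note cov = layer_combination_cov_var(1)[OF assms(2-4)]
    and var = layer_combination_cov_var(2)[OF assms(2-4)]
  have "2 ^ t / sqrt ((2 ^ t)\<^sup>2 + noise_to_signal t * (2 ^ t)\<^sup>2) = 1 / sqrt (noise_to_signal t + 1)"
    by (rule div_sqrt_add_sq_eq) simp
  then have optimum: "Cov M (\<lambda>\<omega>. \<Sum>i\<le>t. real (t choose i) * gbX 1 (1/2) X0 W (i, t - i) \<omega>) X0
      / sqrt (Var M (\<lambda>\<omega>. \<Sum>i\<le>t. real (t choose i) * gbX 1 (1/2) X0 W (i, t - i) \<omega>))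
      = 1 / sqrt (noise_to_signal t + 1)"
    by (simp add: cov var layer_noise_binomial_norm sum_choose_real)
  have "Cov M (\<lambda>\<omega>. \<Sum>i\<le>t. c i * gbX 1 (1/2) X0 W (i, t - i) \<omega>) X0
      / sqrt (Var M (\<lambda>\<omega>. \<Sum>i\<le>t. c i * gbX 1 (1/2) X0 W (i, t - i) \<omega>))
      \<le> 1 / sqrt (noise_to_signal t + 1)" for c
    using div_sqrt_add_sq_le[OF noise_to_signal_nonneg layer_noise_norm_lower_bound[of t c]]
    by (simp add: cov var)
  with optimum show ?thesis
    by (simp add: noise_to_signal_def)
qed

end
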